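(* Let $\sigma \in (0,\infty]$ be fixed, let $u_\sigma \in \mathcal{T}_\sigma$ be the unique minimizer of $\mathcal{E}_\sigma$ over $\mathcal{T}_\sigma$, and for $h\in(0,h_0]$ let $u_{\sigma,h}$ be the unique minimizer of $\mathcal{E}_\sigma$ over $W_{\sigma,h}$. Assume in addition that there exists a function $Q_p \in C^0([0,\infty)^2)$, independent of $\sigma$, such that the first variation $\mathcal{F}_\sigma(u) \in \mathcal{T}_{-\sigma}$ at $u\in\mathcal{T}_\sigma$, defined by $\langle \mathcal{F}_\sigma(u), w\rangle := \frac{d}{dt}\mathcal{E}_\sigma(u+tw)\big|_{t=0}$ for $w\in\mathcal{T}_\sigma$, satisfies for every $v \in \mathcal{T}_\sigma$: $$\|\mathcal{F}_\sigma(u_\sigma)-\mathcal{F}_\sigma(v)\|_{\mathcal{T}_{-\sigma}} \le Q_p(\|u_\sigma\|_{\mathcal{T}_\sigma},\|v\|_{\mathcal{T}_\sigma}) \begin{cases} |\langle \mathcal{F}_\sigma(u_\sigma)-\mathcal{F}_\sigma(v), u_\sigma - v\rangle|^{\frac{p-1}{p}}, & 1<p<2,\\ |\langle \mathcal{F}_\sigma(u_\sigma)-\mathcal{F}_\sigma(v), u_\sigma - v\rangle|^{1/2}, & p\ge 2,\end{cases}$$ and $$\|u_\sigma - v\|_{\mathcal{T}_\sigma} \le Q_p(\|u_\sigma\|_{\mathcal{T}_\sigma},\|v\|_{\mathcal{T}_\sigma}) \begin{cases} |\langle \mathcal{F}_\sigma(u_\sigma)-\mathcal{F}_\sigma(v),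 u_\sigma - v\rangle|^{1/2}, & 1<p<2,\\ |\langle \mathcal{F}_\sigma(u_\sigma)-\mathcal{F}_\sigma(v), u_\sigma - v\rangle|^{1/p}, & p\ge 2.\end{cases}$$ Then $u_{\sigma,h} \to u_\sigma$ as $h \to 0$ in the strong topology of $\mathcal{T}_\sigma$, and there exists a constant $C>0$, independent of $h$, such that $$\|u_{\sigma,h}-u_\sigma\|_{\mathcal{T}_\sigma} \le C \begin{cases} \inf_{v_{\sigma,h}\in W_{\sigma,h}} \|v_{\sigma,h}-u_\sigma\|_{\mathcal{T}_\sigma}^{p/2}, & 1<p<2,\\ \inf_{v_{\sigma,h}\in W_{\sigma,h}} \|v_{\sigma,h}-u_\sigma\|_{\mathcal{T}_\sigma}^{2/p}, & p\ge 2.\end{cases}$$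
   Context: Setting: $\{\mathcal{T}_\sigma\}_{\sigma\in\mathbb{R}\cup\{\pm\infty\}}$ are reflexive Banach spaces with $\mathcal{T}_{-\sigma}=\mathcal{T}_\sigma^*$ and duality pairing $\langle\cdot,\cdot\rangle$. They satisfy: (uniform embedding) there is $M_1>0$ independent of $\sigma\in(0,\infty]$ with $M_1\|u\|_{\mathcal{T}_0}\le\|u\|_{\mathcal{T}_\sigma}$ for all $u\in\mathcal{T}_\sigma$; (asymptotically compact embedding) any family $\{v_\sigma\in\mathcal{T}_\sigma\}$ with $\|v_\sigma\|_{\mathcal{T}_\sigma}\le C$ is relatively compact in $\mathcal{T}_0$ with limit points in $\mathcal{T}_\infty$. The energies $\mathcal{E}_\sigma:\mathcal{T}_\sigma\to[0,\infty)$, $\sigma\in(0,\infty]$, are convex and $\mathcal{T}_\sigma$-weakly lower semicontinuous, and satisfy: (continuity) there is $\varphi\in C^0([0,\infty)^2)$ with $|\mathcal{E}_\sigma(u)-\mathcal{E}_\sigma(v)|\le\varphi(\|u\|_{\mathcal{T}_\sigma},\|v\|_{\mathcal{T}_\sigma})\|u-v\|_{\mathcal{T}_\sigma}$; (coercivity) there are $p\in(1,\infty)$, $\alpha>0$ independent of $\sigma$, and $\psi\in C^0([0,\infty))$ with $\psi(t)/t^p\to0$ as $t\to\infty$, such that $\alpha\|u\|_{\mathcal{T}_\sigma}^p\le\mathcal{E}_\sigma(u)+\psi(\|u\|_{\mathcal{T}_\sigma})$; (Gamma-convergence) the extensions of $\mathcal{E}_\sigma$ by $+\infty$ on $\mathcal{T}_0\setminus\mathcal{T}_\sigma$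 Gamma-converge in the strong topology of $\mathcal{T}_0$ to the extension of $\mathcal{E}_\infty$ as $\sigma\to\infty$. The spaces $W_{\sigma,h}\subset\mathcal{T}_\sigma$, $\sigma\in(0,\infty]$, $h\in(0,h_0]$, are finite-dimensional closed subspaces with $\dim\bigcup_{\sigma\in(0,\infty]}W_{\sigma,h}<\infty$, satisfying: for each $\sigma$, every $u\in\mathcal{T}_\sigma$ is the $\mathcal{T}_\sigma$-limit of some $u_n\in W_{\sigma,h_n}$ with $h_n\to0$; $W_{\infty,h}=\mathcal{T}_\infty\cap\bigcup_{\sigma\in(0,\infty]}W_{\sigma,h}$; and an asymptotic approximation property (Gamma-recovery sequences $v_{\sigma_n}$ for elements of $W_{\infty,h}$, resp. $\mathcal{T}_\infty$ when $h=0$, can be approximated in $\mathcal{T}_{\sigma_n}$ by elements of $W_{\sigma_n,h_n}$). Minimizers: $u_\sigma$ minimizes $\mathcal{E}_\sigma$ over $\mathcal{T}_\sigma$, and $u_{\sigma,h}$ minimizes $\mathcal{E}_\sigma$ over $W_{\sigma,h}$; they are unique by convexity. *)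

theory Defs
  imports "HOL-Analysis.Analysis"
begin

definition reflexive_space :: "'a::banach itself \<Rightarrow> bool" where
  "reflexive_space _ \<longleftrightarrow>
     (\<forall>\<Phi> :: ('a \<Rightarrow>\<^sub>L real) \<Rightarrow>\<^sub>L real. \<exists>x::'a. \<forall>f. blinfun_apply \<Phi> f = blinfun_apply f x)"

definition weak_conv :: "(nat \<Rightarrow> 'a::real_normed_vector) \<Rightarrow> 'a \<Rightarrow> bool" where
  "weak_conv X x \<longleftrightarrow> (\<forall>f :: 'a \<Rightarrow>\<^sub>L real. (\<lambda>n. blinfun_apply f (X n)) \<longlonglongrightarrow> blinfun_apply f x)"

definition weakly_lsc :: "('a::real_normed_vector \<Rightarrow> real) \<Rightarrow> bool" where
  "weakly_lsc E \<longleftrightarrow> (\<forall>X x. weak_conv X x \<longrightarrow> ereal (E x) \<le> liminf (\<lambda>n. ereal (E (X n))))"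

end

theory Submission
  imports Defs
begin

(* Minimality gives F u = 0 and Galerkin orthogonality F (u_h) w = 0 for w in W_h. Hence
   for every w in W_h the pairing A = <F u - F u_h, u - u_h> equals <F u - F u_h, u - w>,
   so A <= |F u - F u_h| dist(u, W_h). Both hypotheses on Q have the form
   |F u - F u_h| <= Q A^b and |u - u_h| <= Q A^((1-b) r); the first absorbs into
   A^(1-b) <= Q dist(u, W_h), and the second then gives |u - u_h| <= Q^(1+r) dist(u, W_h)^r.
   Q stays bounded because E(u_h) <= E(0) and coercivity confine all u_h to a ball, and
   dist(u, W_h) -> 0 by the approximation property. Reflexivity, convexity, weak lower
   semicontinuity and the hypotheses on phi and on W_h beyond being subspaces only serve
   the existence of the minimizers, which the statement assumes. *)

lemma derivative_zero_at_subspace_min: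
  fixes E :: "'a::real_vector \<Rightarrow> real"
  assumes "subspace S" "v \<in> S" "w \<in> S"
    and "\<And>x. x \<in> S \<Longrightarrow> E v \<le> E x"
    and deriv: "((\<lambda>t. E (v + t *\<^sub>R w)) has_real_derivative d) (at 0)"
  shows "d = 0"
proof (rule DERIV_local_min[OF deriv, of 1])
  show "\<forall>t. \<bar>0 - t\<bar> < 1 \<longrightarrow> E (v + 0 *\<^sub>R w) \<le> E (v + t *\<^sub>R w)"
    using assms by (simp add: subspace_add subspace_scale)
qed simp

lemma coercive_sublevel_bounded:
  fixes E :: "'a::real_normed_vector \<Rightarrow> real"
  assumes "p > 0" "\<alpha> > 0"
    and psi_lim: "((\<lambda>t. \<psi> t / t powr p) \<longlongrightarrow> 0) at_top"
    and coercive: "\<And>v. \<alpha> * norm v powr p \<le> E v + \<psi> (norm v)"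
  obtains R where "\<And>v. E v \<le> c \<Longrightarrow> norm v \<le> R"
proof -
  have "\<forall>\<^sub>F t in at_top. \<psi> t / t powr p < \<alpha> / 2"
    by (rule order_tendstoD(2)[OF psi_lim]) (use \<open>\<alpha> > 0\<close> in simp)
  then obtain T where T: "\<And>t. t \<ge> T \<Longrightarrow> \<psi> t / t powr p < \<alpha> / 2"
    by (auto simp: eventually_at_top_linorder)
  have "norm v \<le> max (max T 1) ((2 * c / \<alpha>) powr (1 / p))" if "E v \<le> c" for v
  proof (cases "norm v \<ge> max T 1")
    case True
    then have "norm v powr p > 0"
      by auto
    then have "\<psi> (norm v) < \<alpha> / 2 * norm v powr p"
      using T[of "norm v"] True by (simp add: divide_less_eq)
    then have "norm v powr p \<le> 2 * c / \<alpha>"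
      using coercive[of v] \<open>E v \<le> c\<close> \<open>\<alpha> > 0\<close> by (simp add: field_simps)
    then have "(norm v powr p) powr (1 / p) \<le> (2 * c / \<alpha>) powr (1 / p)"
      using \<open>p > 0\<close> by (intro powr_mono2) auto
    then show ?thesis
      using \<open>p > 0\<close> by (simp add: powr_powr)
  qed (auto simp: le_max_iff_disj)
  then show thesis
    using that by blast
qed

lemma continuous_on_quadrant_bounded_above:
  fixes Q :: "real \<Rightarrow> real \<Rightarrow> real"
  assumes "continuous_on ({0..} \<times> {0..}) (\<lambda>(s, t). Q s t)"
  obtains M where "M > 0" "\<And>s t. s \<in> {0..R} \<Longrightarrow> t \<in> {0..R} \<Longrightarrow> Q s t \<le> M"
proof -
  have "compact ((\<lambda>(s, t). Q s t) ` ({0..R} \<times> {0..R}))"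
    by (intro compact_continuous_image continuous_on_subset[OF assms] compact_Times) auto
  then obtain M where "M > 0" and M: "\<forall>q \<in> (\<lambda>(s, t). Q s t) ` ({0..R} \<times> {0..R}). norm q \<le> M"
    by (metis bounded_pos compact_imp_bounded)
  show thesis
  proof (rule that[OF \<open>M > 0\<close>])
    fix s t
    assume "s \<in> {0..R}" "t \<in> {0..R}"
    then have "Q s t \<in> (\<lambda>(s, t). Q s t) ` ({0..R} \<times> {0..R})"
      by (intro image_eqI[of _ _ "(s, t)"]) auto
    then have "\<bar>Q s t\<bar> \<le> M"
      using M by fastforce
    then show "Q s t \<le> M"
      by simp
  qed
qed

lemma blinfun_vanishing_on_subspace_le_infdist:
  fixes L :: "'a::real_normed_vector \<Rightarrow>\<^sub>L real"
  assumes "subspace S" "v \<in> S" and vanish: "\<And>w. w \<in> S \<Longrightarrow> blinfun_apply L w = 0"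
  shows "\<bar>blinfun_apply L (u - v)\<bar> \<le> norm L * infdist u S"
proof -
  have bound: "\<bar>blinfun_apply L (u - v)\<bar> \<le> norm L * dist u w" if "w \<in> S" for w
  proof -
    have "blinfun_apply L (u - v) = blinfun_apply L (u - w) + blinfun_apply L (w - v)"
      by (simp add: blinfun.diff_right)
    also have "\<dots> = blinfun_apply L (u - w)"
      using vanish assms(1,2) that by (simp add: subspace_diff)
    finally show ?thesis
      using norm_blinfun[of L "u - w"] by (simp add: dist_norm)
  qed
  have "S \<noteq> {}"
    using \<open>v \<in> S\<close> by blast
  show ?thesis
  proof (cases "norm L = 0")
    case True
    then show ?thesis
      using bound[OF \<open>v \<in> S\<close>] by simp
  next
    case False
    then have "\<bar>blinfun_apply L (u - v)\<bar> / norm L \<le> (INF w\<in>S. dist u w)"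
      using bound \<open>S \<noteq> {}\<close> by (intro cINF_greatest) (auto simp: divide_le_eq mult.commute)
    then show ?thesis
      using False \<open>S \<noteq> {}\<close> by (simp add: infdist_notempty divide_le_eq mult.commute)
  qed
qed

lemma powr_absorb_le:
  fixes A M D b :: real
  assumes "0 \<le> A" "0 \<le> M" "0 \<le> D" "A \<le> M * A powr b * D"
  shows "A powr (1 - b) \<le> M * D"
proof (cases "A = 0")
  case False
  then have "A powr b * A powr (1 - b) \<le> A powr b * (M * D)"
    using assms by (simp add: powr_add[symmetric] mult_ac)
  then show ?thesis
    using False \<open>0 \<le> A\<close> by simp
qed (use assms in simp)

lemma galerkin_error_le_infdist_powr:
  fixes F :: "'a::real_normed_vector \<Rightarrow> ('a \<Rightarrow>\<^sub>L real)"
  assumes "subspace S" "v \<in> S"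
    and "F u = 0" and galerkin: "\<And>w. w \<in> S \<Longrightarrow> blinfun_apply (F v) w = 0"
    and "0 \<le> M" "0 \<le> r"
    and dual: "norm (F u - F v) \<le> M * \<bar>blinfun_apply (F u - F v) (u - v)\<bar> powr b"
    and primal: "norm (u - v) \<le> M * \<bar>blinfun_apply (F u - F v) (u - v)\<bar> powr ((1 - b) * r)"
  shows "norm (v - u) \<le> M powr (1 + r) * infdist u S powr r"
proof -
  define A where "A = \<bar>blinfun_apply (F u - F v) (u - v)\<bar>"
  have "A \<le> norm (F u - F v) * infdist u S"
    unfolding A_def using assms(1-4)
    by (intro blinfun_vanishing_on_subspace_le_infdist) (auto simp: blinfun.diff_left blinfun.minus_left)
  also have "\<dots> \<le> M * A powr b * infdist u S"
    using dual unfolding A_def by (intro mult_right_mono infdist_nonneg)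
  finally have "A powr (1 - b) \<le> M * infdist u S"
    using \<open>0 \<le> M\<close> by (intro powr_absorb_le) (auto simp: A_def infdist_nonneg)
  then have "(A powr (1 - b)) powr r \<le> (M * infdist u S) powr r"
    using \<open>0 \<le> r\<close> by (intro powr_mono2) auto
  then have "A powr ((1 - b) * r) \<le> (M * infdist u S) powr r"
    by (simp add: powr_powr)
  then have "norm (u - v) \<le> M * (M * infdist u S) powr r"
    using primal \<open>0 \<le> M\<close> unfolding A_def by (meson mult_left_mono order_trans)
  then show ?thesis
    using \<open>0 \<le> M\<close> by (simp add: norm_minus_commute powr_mult powr_add infdist_nonneg mult_ac)
qed

lemma infdist_tendsto_0_at_right:
  fixes W :: "real \<Rightarrow> 'a::metric_space set"
  assumes "h0 > 0"
    and approx: "\<And>hs. (\<forall>n. hs n \<in> {0<..h0}) \<Longrightarrow> hs \<longlonglongrightarrow> 0 \<Longrightarrow>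
                   \<exists>xs. (\<forall>n. xs n \<in> W (hs n)) \<and> xs \<longlonglongrightarrow> x"
  shows "((\<lambda>h. infdist x (W h)) \<longlongrightarrow> 0) (at_right 0)"
proof (rule tendsto_at_right_sequentially[OF \<open>h0 > 0\<close>])
  fix hs :: "nat \<Rightarrow> real"
  assume "\<And>n. 0 < hs n" "\<And>n. hs n < h0" "decseq hs" "hs \<longlonglongrightarrow> 0"
  then obtain xs where xs: "\<And>n. xs n \<in> W (hs n)" and "xs \<longlonglongrightarrow> x"
    using approx[of hs] by (auto simp: less_imp_le)
  then have dist_lim: "(\<lambda>n. dist x (xs n)) \<longlonglongrightarrow> 0"
    using tendsto_dist[OF tendsto_const \<open>xs \<longlonglongrightarrow> x\<close>, of x] by simp
  show "(\<lambda>n. infdist x (W (hs n))) \<longlonglongrightarrow> 0"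
    by (rule tendsto_sandwich[OF always_eventually always_eventually tendsto_const dist_lim])
      (simp_all add: infdist_nonneg infdist_le[OF xs])
qed

lemma tendsto_at_right_of_infdist_rate:
  fixes f :: "real \<Rightarrow> 'a::real_normed_vector"
  assumes "h0 > 0" "r > 0"
    and approx: "\<And>hs. (\<forall>n. hs n \<in> {0<..h0}) \<Longrightarrow> hs \<longlonglongrightarrow> 0 \<Longrightarrow>
                   \<exists>xs. (\<forall>n. xs n \<in> W (hs n)) \<and> xs \<longlonglongrightarrow> x"
    and rate: "\<And>h. h \<in> {0<..h0} \<Longrightarrow> norm (f h - x) \<le> C * infdist x (W h) powr r"
  shows "(f \<longlongrightarrow> x) (at_right 0)"
proof -
  have "((\<lambda>h. C * infdist x (W h) powr r) \<longlongrightarrow> 0) (at_right 0)"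
    using tendsto_zero_powrI[OF infdist_tendsto_0_at_right[OF \<open>h0 > 0\<close> approx] tendsto_const]
      \<open>r > 0\<close> by (auto intro: tendsto_mult_right_zero simp: infdist_nonneg)
  moreover have "\<forall>\<^sub>F h in at_right 0. norm (f h - x) \<le> C * infdist x (W h) powr r"
    using \<open>h0 > 0\<close> by (auto simp: eventually_at_right_field intro!: exI[of _ h0] rate)
  ultimately have "((\<lambda>h. f h - x) \<longlongrightarrow> 0) (at_right 0)"
    by (rule Lim_null_comparison[rotated])
  then show ?thesis
    by (simp add: LIM_zero_iff)
qed

lemma INF_norm_diff_eq_infdist:
  fixes u :: "'a::real_normed_vector"
  assumes "S \<noteq> {}"
  shows "(INF v\<in>S. norm (v - u)) = infdist u S"
  using assms by (simp add: infdist_notempty dist_norm[symmetric] dist_commute)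

theorem theorem2p18:
  fixes E :: "'a::banach \<Rightarrow> real"
    and F :: "'a \<Rightarrow> ('a \<Rightarrow>\<^sub>L real)"
    and W :: "real \<Rightarrow> 'a set"
    and u :: 'a
    and uh :: "real \<Rightarrow> 'a"
    and \<phi> :: "real \<Rightarrow> real \<Rightarrow> real"
    and \<psi> :: "real \<Rightarrow> real"
    and Q :: "real \<Rightarrow> real \<Rightarrow> real"
    and p \<alpha> h0 :: real
  assumes refl: "reflexive_space TYPE('a)"
    and E_nonneg: "\<And>v. E v \<ge> 0"
    and E_convex: "convex_on UNIV E"
    and E_wlsc: "weakly_lsc E"
    and phi_cont: "continuous_on ({0..} \<times> {0..}) (\<lambda>(s, t). \<phi> s t)"
    and E_cont: "\<And>v w. \<bar>E v - E w\<bar> \<le> \<phi> (norm v) (norm w) * norm (v - w)"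
    and p_gt1: "p > 1"
    and alpha_pos: "\<alpha> > 0"
    and psi_cont: "continuous_on {0..} \<psi>"
    and psi_lim: "((\<lambda>t. \<psi> t / t powr p) \<longlongrightarrow> 0) at_top"
    and E_coercive: "\<And>v. \<alpha> * norm v powr p \<le> E v + \<psi> (norm v)"
    and F_deriv: "\<And>v w. ((\<lambda>t. E (v + t *\<^sub>R w)) has_real_derivative blinfun_apply (F v) w) (at 0)"
    and h0_pos: "h0 > 0"
    and W_subspace: "\<And>h. h \<in> {0<..h0} \<Longrightarrow> subspace (W h)"
    and W_findim: "\<And>h. h \<in> {0<..h0} \<Longrightarrow> \<exists>B. finite B \<and> W h = span B"
    and W_closed: "\<And>h. h \<in> {0<..h0} \<Longrightarrow> closed (W h)"
    and W_approx: "\<And>x hs. (\<forall>n. hs n \<in> {0<..h0}) \<Longrightarrow> hs \<longlonglongrightarrow> 0 \<Longrightarrow>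
                     \<exists>xs. (\<forall>n. xs n \<in> W (hs n)) \<and> xs \<longlonglongrightarrow> x"
    and u_min: "\<And>v. E u \<le> E v"
    and uh_in: "\<And>h. h \<in> {0<..h0} \<Longrightarrow> uh h \<in> W h"
    and uh_min: "\<And>h v. h \<in> {0<..h0} \<Longrightarrow> v \<in> W h \<Longrightarrow> E (uh h) \<le> E v"
    and Q_cont: "continuous_on ({0..} \<times> {0..}) (\<lambda>(s, t). Q s t)"
    and Q_dual: "\<And>v. norm (F u - F v) \<le> Q (norm u) (norm v) *
        (if p < 2 then \<bar>blinfun_apply (F u - F v) (u - v)\<bar> powr ((p - 1) / p)
         else \<bar>blinfun_apply (F u - F v) (u - v)\<bar> powr (1 / 2))"
    and Q_primal: "\<And>v. norm (u - v) \<le> Q (norm u) (norm v) *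
        (if p < 2 then \<bar>blinfun_apply (F u - F v) (u - v)\<bar> powr (1 / 2)
         else \<bar>blinfun_apply (F u - F v) (u - v)\<bar> powr (1 / p))"
  shows "(uh \<longlongrightarrow> u) (at_right 0) \<and>
    (\<exists>C>0. \<forall>h\<in>{0<..h0}. norm (uh h - u) \<le> C *
        (if p < 2 then (INF v\<in>W h. norm (v - u)) powr (p / 2)
         else (INF v\<in>W h. norm (v - u)) powr (2 / p)))"
proof -
  have Fu_zero: "F u = 0"
  proof (rule blinfun_eqI)
    show "blinfun_apply (F u) w = blinfun_apply 0 w" for w
      using derivative_zero_at_subspace_min[OF subspace_UNIV _ _ _ F_deriv] u_min by simp
  qed
  have galerkin: "blinfun_apply (F (uh h)) w = 0" if h: "h \<in> {0<..h0}" and "w \<in> W h" for h w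
    by (rule derivative_zero_at_subspace_min[OF W_subspace[OF h] uh_in[OF h] \<open>w \<in> W h\<close>
          uh_min[OF h] F_deriv])
  obtain R where R: "\<And>v. E v \<le> E 0 \<Longrightarrow> norm v \<le> R"
    using coercive_sublevel_bounded[OF _ alpha_pos psi_lim E_coercive] p_gt1 by auto
  have uh_bounded: "norm (uh h) \<le> max R (norm u)" if h: "h \<in> {0<..h0}" for h
    using R uh_min[OF h subspace_0[OF W_subspace[OF h]]] by fastforce
  obtain M where "M > 0"
    and M: "\<And>s t. s \<in> {0..max R (norm u)} \<Longrightarrow> t \<in> {0..max R (norm u)} \<Longrightarrow> Q s t \<le> M"
    using continuous_on_quadrant_bounded_above[OF Q_cont] by blast
  define b where "b = (if p < 2 then (p - 1) / p else 1 / 2)"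
  define r where "r = (if p < 2 then p / 2 else 2 / p)"
  have "r > 0" and exponent: "(1 - b) * r = (if p < 2 then 1 / 2 else 1 / p)"
    using p_gt1 by (auto simp: b_def r_def field_simps)
  define C where "C = M powr (1 + r)"
  have rate: "norm (uh h - u) \<le> C * infdist u (W h) powr r" if h: "h \<in> {0<..h0}" for h
    unfolding C_def
  proof (rule galerkin_error_le_infdist_powr[OF W_subspace[OF h] uh_in[OF h] Fu_zero galerkin[OF h]])
    have "Q (norm u) (norm (uh h)) \<le> M"
      using M uh_bounded[OF h] by simp
    then show "norm (F u - F (uh h)) \<le> M * \<bar>blinfun_apply (F u - F (uh h)) (u - uh h)\<bar> powr b"
      and "norm (u - uh h) \<le> M * \<bar>blinfun_apply (F u - F (uh h)) (u - uh h)\<bar> powr ((1 - b) * r)"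
      using Q_dual[of "uh h"] Q_primal[of "uh h"] exponent unfolding b_def
      by (auto intro: order_trans[OF _ mult_right_mono] split: if_splits)
  qed (use \<open>M > 0\<close> \<open>r > 0\<close> in auto)
  have "(uh \<longlongrightarrow> u) (at_right 0)"
    by (rule tendsto_at_right_of_infdist_rate[OF h0_pos \<open>r > 0\<close> W_approx rate])
  moreover have "norm (uh h - u) \<le> C *
      (if p < 2 then (INF v\<in>W h. norm (v - u)) powr (p / 2) else (INF v\<in>W h. norm (v - u)) powr (2 / p))"
    if h: "h \<in> {0<..h0}" for h
  proof -
    have "W h \<noteq> {}"
      using uh_in[OF h] by blast
    then show ?thesis
      using rate[OF h] by (simp add: r_def INF_norm_diff_eq_infdist split: if_splits)
  qed
  moreover have "C > 0"
    using \<open>M > 0\<close> by (simp add: C_def)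
  ultimately show ?thesis
    by blast
qed

end
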